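(* Let $p\ge1$, $T>0$, $\delta_n=2^{-n}$, and let $S\in C^0([0,T],\mathbb R)$ with $S_0=0$ have a continuous local time $L^{\pi,p}$ of order $p$ along the sequence $\pi=(\pi_n)$ of Lebesgue partitions defined below, with $L^{\pi,p}_t(S,0)>0$ for $t\in(0,T]$. Then for every $t\in(0,T]$, as $n\to\infty$: (i) if $1\le p<2$, $\delta_n D^{\delta_n}_t(S)\to0$; (ii) if $p>2$, $\delta_nD^{\delta_n}_t(S)\to\infty$ and $D^{\delta_n}_t(S)\sim L^{\pi,p}_t(S,0)/\delta_n^{p-1}$; (iii) if $p=2$, $\delta_nD^{\delta_n}_t(S)\to L^{\pi,2}_t(S,0)$, i.e. $D^{\delta_n}_t(S)\sim L^{\pi,2}_t(S,0)/\delta_n$.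
   Context: Lebesgue partitions: $\pi_n=\{t^n_k\}$ with $t^n_0=0$, $t^n_{k+1}=\inf\{t\ge t^n_k: S_t\in\delta_n\mathbb Z\setminus\{S_{t^n_k}\}\}$. For $a,b\in\mathbb R$ write $[\![a,b))=[a,b)$ if $a\le b$ and $[b,a)$ if $a>b$. Set $L^{\pi_n,p}_t(S,x)=\sum_{t^n_j\in\pi_n}1_{[\![S_{t^n_j\wedge t},S_{t^n_{j+1}\wedge t}))}(x)\,|S_{t^n_{j+1}\wedge t}-x|^{p-1}$. $S$ has a continuous local time of order $p$ along $\pi$ if $L^{\pi_n,p}_t(S,x)$ converges, uniformly in $(t,x)\in[0,T]\times\mathbb R$, to a limit $L^{\pi,p}_t(S,x)$ and $(t,x)\mapsto L^{\pi,p}_t(S,x)$ is continuous. Number of $\delta$-excursions: with $\theta^+_0=\tau^+_0=0$, $\tau^+_i=\inf\{u>\theta^+_{i-1}:S_u=\delta\}$, $\theta^+_i=\inf\{u>\tau^+_i:S_u=0\}$, set $D^\delta_t(S)=\sum_{i\ge1}1_{\{\theta^+_i\le t\}}$. *)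

theory Defs
  imports "HOL-Analysis.Analysis" "HOL-Library.Landau_Symbols"
begin

definition dyad :: "nat \<Rightarrow> real" where
  "dyad n = inverse (2 ^ n)"

definition on_grid :: "real \<Rightarrow> real \<Rightarrow> bool" where
  "on_grid \<delta> y \<longleftrightarrow> (\<exists>m::int. y = \<delta> * of_int m)"

text \<open>Convention: the infimum of the empty set is +infinity, encoded by the value T+1
  (any value > T; all later points are then also T+1 and contribute nothing).\<close>
fun leb_pt :: "(real \<Rightarrow> real) \<Rightarrow> real \<Rightarrow> real \<Rightarrow> nat \<Rightarrow> real" where
  "leb_pt S T \<delta> 0 = 0"
| "leb_pt S T \<delta> (Suc k) =
     (let a = leb_pt S T \<delta> k;
          A = {t. a \<le> t \<and> t \<le> T \<and> on_grid \<delta> (S t) \<and> S t \<noteq> S a}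
      in if A = {} then T + 1 else Inf A)"

definition oint :: "real \<Rightarrow> real \<Rightarrow> real set" where
  "oint a b = (if a \<le> b then {a..<b} else {b..<a})"

text \<open>Power with the convention y^0 = 1 (also for y = 0), unlike powr.\<close>
definition rpow :: "real \<Rightarrow> real \<Rightarrow> real" where
  "rpow y e = (if e = 0 then 1 else y powr e)"

definition disc_lt :: "(real \<Rightarrow> real) \<Rightarrow> real \<Rightarrow> real \<Rightarrow> real \<Rightarrow> real \<Rightarrow> real \<Rightarrow> real" where
  "disc_lt S T \<delta> p t x =
     (\<Sum>j. indicator (oint (S (min (leb_pt S T \<delta> j) t)) (S (min (leb_pt S T \<delta> (Suc j)) t))) x
          * rpow \<bar>S (min (leb_pt S T \<delta> (Suc j)) t) - x\<bar> (p - 1))"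

text \<open>First time strictly after a (within [0,T]) at which P holds; T+1 encodes +infinity.\<close>
definition hit :: "real \<Rightarrow> (real \<Rightarrow> bool) \<Rightarrow> real \<Rightarrow> real" where
  "hit T P a = (let A = {u. a < u \<and> u \<le> T \<and> P u} in if A = {} then T + 1 else Inf A)"

fun exc :: "(real \<Rightarrow> real) \<Rightarrow> real \<Rightarrow> real \<Rightarrow> nat \<Rightarrow> real \<times> real" where
  "exc S T \<delta> 0 = (0, 0)"
| "exc S T \<delta> (Suc i) =
     (let \<tau> = hit T (\<lambda>u. S u = \<delta>) (snd (exc S T \<delta> i))
      in (\<tau>, hit T (\<lambda>u. S u = 0) \<tau>))"

definition num_exc :: "(real \<Rightarrow> real) \<Rightarrow> real \<Rightarrow> real \<Rightarrow> real \<Rightarrow> nat" where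
  "num_exc S T \<delta> t = card {i. 1 \<le> i \<and> snd (exc S T \<delta> i) \<le> t}"

end

theory Submission
  imports Defs
begin

text \<open>Between consecutive Lebesgue partition points the path moves by exactly \<open>\<delta>\<close>, so the
  values \<open>S(t\<^sub>k)\<close> form a walk on \<open>\<delta>\<int>\<close> with steps \<open>\<plusminus>\<delta>\<close>. Every completed \<open>\<delta>\<close>-excursion
  contains an upcrossing \<open>0 \<rightarrow> \<delta>\<close> of this walk, and between two upcrossings an excursion is
  completed, so the number \<open>U\<^sub>t\<close> of upcrossings completed by time \<open>t\<close> satisfies
  \<open>D\<^sub>t \<le> U\<^sub>t \<le> D\<^sub>t + 1\<close>. In the discrete local time at level \<open>0\<close> every upcrossing contributes
  \<open>\<delta>\<^sup>p\<^sup>-\<^sup>1\<close>, for \<open>p > 1\<close> no other completed step contributes, and the step straddling \<open>t\<close>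
  contributes at most \<open>\<delta>\<^sup>p\<^sup>-\<^sup>1\<close>. Hence \<open>\<delta>\<^sup>p\<^sup>-\<^sup>1 D\<^sub>t \<le> L\<^sup>n\<^sub>t(0) \<le> \<delta>\<^sup>p\<^sup>-\<^sup>1 (D\<^sub>t + 2)\<close>, and the three
  regimes follow from \<open>L\<^sup>n\<^sub>t(0) \<rightarrow> L\<^sub>t(0) > 0\<close> by writing \<open>\<delta> D\<^sub>t = \<delta>\<^sup>2\<^sup>-\<^sup>p \<cdot> \<delta>\<^sup>p\<^sup>-\<^sup>1 D\<^sub>t\<close>.\<close>

lemma on_grid_unique:
  assumes "(\<delta>::real) > 0" "on_grid \<delta> y" "on_grid \<delta> z" "\<bar>y - z\<bar> < \<delta>"
  shows "y = z"
proof -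
  obtain m n :: int where m: "y = \<delta> * m" and n: "z = \<delta> * n"
    using assms unfolding on_grid_def by blast
  have "\<delta> * \<bar>of_int m - of_int n\<bar> < \<delta> * 1"
    using assms(1,4) m n by (simp add: abs_mult right_diff_distrib[symmetric])
  hence "\<bar>of_int m - of_int n\<bar> < (1::real)" using assms(1) by (simp only: mult_less_cancel_left_pos)
  hence "m = n" by linarith
  thus ?thesis using m n by simp
qed

lemma on_grid_0 [simp]: "on_grid \<delta> 0"
  unfolding on_grid_def by (rule exI[of _ 0]) simp

lemma on_grid_self [simp]: "on_grid \<delta> \<delta>"
  unfolding on_grid_def by (rule exI[of _ 1]) simp

lemma on_grid_add_self: "on_grid \<delta> y \<Longrightarrow> on_grid \<delta> (y + \<delta>)"
  unfolding on_grid_def by (metis mult.right_neutral of_int_add of_int_1 distrib_left)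

lemma on_grid_diff_self: "on_grid \<delta> y \<Longrightarrow> on_grid \<delta> (y - \<delta>)"
  unfolding on_grid_def by (metis mult.right_neutral of_int_diff of_int_1 right_diff_distrib)

lemma rpow_nonneg: "0 \<le> rpow y e"
  unfolding rpow_def by simp

lemma rpow_pos: "0 < y \<Longrightarrow> rpow y e = y powr e"
  unfolding rpow_def by simp

lemma rpow_mono: "0 \<le> x \<Longrightarrow> x \<le> y \<Longrightarrow> 0 \<le> e \<Longrightarrow> rpow x e \<le> rpow y e"
  unfolding rpow_def by (auto intro: powr_mono2)

lemma hit_le: "a < u \<Longrightarrow> u \<le> T \<Longrightarrow> P u \<Longrightarrow> hit T P a \<le> u"
  unfolding hit_def Let_def by (auto intro!: cInf_lower bdd_belowI[of _ a])

lemma hit_beyond: "T \<le> a \<Longrightarrow> hit T P a = T + 1"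
  unfolding hit_def Let_def by auto

lemma hit_cases: "hit T P a = T + 1 \<or> (a \<le> hit T P a \<and> hit T P a \<le> T)"
proof (cases "{u. a < u \<and> u \<le> T \<and> P u} = {}")
  case True thus ?thesis unfolding hit_def Let_def by auto
next
  case False
  hence "Inf {u. a < u \<and> u \<le> T \<and> P u} \<le> T" "a \<le> Inf {u. a < u \<and> u \<le> T \<and> P u}"
    by (auto intro!: cInf_greatest bdd_belowI[of _ a] cInf_le_iff[THEN iffD2])
  thus ?thesis unfolding hit_def Let_def using False by auto
qed

lemma hit_attained:
  fixes S :: "real \<Rightarrow> 'a::t1_space"
  assumes "continuous_on {a..T} S" "S a \<noteq> v" "hit T (\<lambda>u. S u = v) a \<le> T"
  shows "a < hit T (\<lambda>u. S u = v) a \<and> S (hit T (\<lambda>u. S u = v) a) = v"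
proof -
  define A where "A = {u. a < u \<and> u \<le> T \<and> S u = v}"
  have "A \<noteq> {}" using assms(3) unfolding hit_def Let_def A_def by (auto split: if_splits)
  hence hit: "hit T (\<lambda>u. S u = v) a = Inf A" unfolding hit_def Let_def A_def by auto
  have A_eq: "A = {x \<in> {a..T}. S x = v}" unfolding A_def using assms(2) by (auto simp: order.order_iff_strict)
  have "closed A" unfolding A_eq by (rule continuous_closed_preimage_constant[OF assms(1)]) simp
  hence "Inf A \<in> A" using \<open>A \<noteq> {}\<close> by (intro closed_contains_Inf) (auto simp: A_def intro: bdd_belowI[of _ a])
  thus ?thesis unfolding hit A_def by auto
qed

declare leb_pt.simps(2) [simp del] exc.simps(2) [simp del]

locale lebesgue_partition =
  fixes S :: "real \<Rightarrow> real" and T \<delta> :: real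
  assumes continuous: "continuous_on {0..T} S" and T_pos: "T > 0" and \<delta>_pos: "\<delta> > 0"
    and S_0: "S 0 = 0"
begin

abbreviation pt :: "nat \<Rightarrow> real" where "pt k \<equiv> leb_pt S T \<delta> k"

lemma grid_exit:
  assumes "0 \<le> a" "a \<le> T" "on_grid \<delta> (S a)"
  defines "A \<equiv> {t. a \<le> t \<and> t \<le> T \<and> on_grid \<delta> (S t) \<and> S t \<noteq> S a}"
  shows "(A = {} \<and> (\<forall>u. a \<le> u \<and> u \<le> T \<longrightarrow> \<bar>S u - S a\<bar> < \<delta>))
       \<or> (A \<noteq> {} \<and> a < Inf A \<and> Inf A \<le> T \<and> \<bar>S (Inf A) - S a\<bar> = \<delta> \<and> on_grid \<delta> (S (Inf A))
           \<and> (\<forall>u. a \<le> u \<and> u < Inf A \<longrightarrow> \<bar>S u - S a\<bar> < \<delta>))"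
proof -
  define c where "c = S a"
  define B where "B = {a..T} \<inter> (\<lambda>u. \<bar>S u - c\<bar>) -` {\<delta>..}"
  have cont: "continuous_on {a..T} S" using assms(1) by (intro continuous_on_subset[OF continuous]) auto
  have AB: "A \<subseteq> B"
    using on_grid_unique[OF \<delta>_pos _ assms(3)] unfolding A_def B_def c_def by force
  show ?thesis
  proof (cases "B = {}")
    case True
    hence "A = {}" using AB by auto
    moreover have "\<forall>u. a \<le> u \<and> u \<le> T \<longrightarrow> \<bar>S u - S a\<bar> < \<delta>"
      using True unfolding B_def c_def by (auto simp: not_le)
    ultimately show ?thesis by blast
  next
    case False
    have "closed B" unfolding B_def
      by (rule continuous_closed_preimage) (auto intro!: continuous_intros cont)
    moreover have bdd: "bdd_below B" unfolding B_def by (rule bdd_belowI[of _ a]) auto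
    ultimately have sB: "Inf B \<in> B" using False by (intro closed_contains_Inf)
    define s where "s = Inf B"
    have smin: "\<And>u. u \<in> B \<Longrightarrow> s \<le> u" unfolding s_def using bdd by (simp add: cInf_lower)
    have s: "a \<le> s" "s \<le> T" "\<delta> \<le> \<bar>S s - c\<bar>" using sB unfolding B_def s_def by auto
    hence as: "a < s" using \<delta>_pos unfolding c_def by (cases "s = a") auto
    have below: "\<forall>u. a \<le> u \<and> u < s \<longrightarrow> \<bar>S u - c\<bar> < \<delta>"
      using smin s unfolding B_def by force
    have "continuous_on {a..s} S" using s by (intro continuous_on_subset[OF cont]) auto
    \<comment> \<open>by the intermediate value theorem, \<open>S\<close> cannot jump past \<open>c \<plusminus> \<delta>\<close> at its first exit\<close>
    have eq: "\<bar>S s - c\<bar> = \<delta>"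
    proof (rule ccontr)
      assume ne: "\<bar>S s - c\<bar> \<noteq> \<delta>"
      obtain x where x: "a \<le> x" "x \<le> s" "\<bar>S x - c\<bar> = \<delta>"
      proof (cases "S s - c > 0")
        case True
        hence "S a \<le> c + \<delta>" "c + \<delta> \<le> S s" using ne s(3) \<delta>_pos unfolding c_def by auto
        thus ?thesis using that IVT'[OF _ _ _ \<open>continuous_on {a..s} S\<close>] as \<delta>_pos by fastforce
      next
        case False
        hence "S s \<le> c - \<delta>" "c - \<delta> \<le> S a" using ne s(3) \<delta>_pos unfolding c_def by auto
        thus ?thesis using that IVT2'[OF _ _ _ \<open>continuous_on {a..s} S\<close>] as \<delta>_pos by fastforce
      qed
      hence "x \<in> B" using s unfolding B_def by auto
      thus False using smin x ne by force
    qed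
    have "S s = S a + \<delta> \<or> S s = S a - \<delta>" using eq unfolding c_def by linarith
    hence "on_grid \<delta> (S s)" using on_grid_add_self[OF assms(3)] on_grid_diff_self[OF assms(3)] by auto
    hence sA: "s \<in> A" unfolding A_def using s eq \<delta>_pos unfolding c_def by auto
    have "Inf A = s" by (rule cInf_eq_minimum[OF sA]) (use AB smin in auto)
    thus ?thesis using sA as s eq \<open>on_grid \<delta> (S s)\<close> below unfolding c_def by auto
  qed
qed

lemma leb_pt_Suc_past_end: "pt k = T + 1 \<Longrightarrow> pt (Suc k) = T + 1"
  by (simp add: leb_pt.simps(2) Let_def)

lemma leb_pt_cases: "(0 \<le> pt k \<and> pt k \<le> T \<and> on_grid \<delta> (S (pt k))) \<or> pt k = T + 1"
proof (induction k)
  case 0 thus ?case using T_pos S_0 by simp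
next
  case (Suc k)
  show ?case
  proof (cases "pt k = T + 1")
    case True thus ?thesis by (simp add: leb_pt_Suc_past_end)
  next
    case False
    hence k: "0 \<le> pt k" "pt k \<le> T" "on_grid \<delta> (S (pt k))" using Suc by auto
    from grid_exit[OF k] k(1) show ?thesis
      by (auto simp add: leb_pt.simps(2) Let_def intro: order.trans[of 0 "pt k"])
  qed
qed

lemma leb_pt_Suc:
  assumes "pt k \<le> T"
  shows "(pt (Suc k) = T + 1 \<and> (\<forall>u. pt k \<le> u \<and> u \<le> T \<longrightarrow> \<bar>S u - S (pt k)\<bar> < \<delta>))
     \<or> (pt k < pt (Suc k) \<and> pt (Suc k) \<le> T \<and> \<bar>S (pt (Suc k)) - S (pt k)\<bar> = \<delta>
         \<and> (\<forall>u. pt k \<le> u \<and> u < pt (Suc k) \<longrightarrow> \<bar>S u - S (pt k)\<bar> < \<delta>))"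
proof -
  have "0 \<le> pt k" "on_grid \<delta> (S (pt k))" using leb_pt_cases[of k] assms T_pos by auto
  from grid_exit[OF this(1) assms this(2)] show ?thesis by (auto simp add: leb_pt.simps(2) Let_def)
qed

lemma leb_pt_le_Suc: "pt k \<le> pt (Suc k)"
  using leb_pt_Suc[of k] leb_pt_cases[of k] T_pos leb_pt_Suc_past_end[of k] by fastforce

lemma leb_pt_mono: "j \<le> k \<Longrightarrow> pt j \<le> pt k"
  using leb_pt_le_Suc by (rule lift_Suc_mono_le)

lemma leb_pt_nonneg: "0 \<le> pt k"
  using leb_pt_mono[of 0 k] by simp

lemma leb_pt_on_grid: "pt k \<le> T \<Longrightarrow> on_grid \<delta> (S (pt k))"
  using leb_pt_cases[of k] T_pos by auto

lemma leb_pt_less: assumes "j < k" "pt k \<le> T" shows "pt j < pt k"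
proof -
  have "pt (Suc j) \<le> pt k" "pt j \<le> T" using leb_pt_mono[of j k] leb_pt_mono[of "Suc j" k] assms by auto
  thus ?thesis using leb_pt_Suc[of j] assms by auto
qed

lemma leb_pt_step:
  "pt (Suc k) \<le> T \<Longrightarrow> pt k < pt (Suc k) \<and> \<bar>S (pt (Suc k)) - S (pt k)\<bar> = \<delta>"
  using leb_pt_Suc[of k] leb_pt_le_Suc[of k] by auto

\<comment> \<open>uniform continuity of \<open>S\<close> bounds the gaps \<open>t\<^sub>k\<^sub>+\<^sub>1 - t\<^sub>k\<close> from below\<close>
lemma leb_pt_exceeds: "\<exists>K. pt K > T"
proof -
  have "uniformly_continuous_on {0..T} S" using continuous by (rule compact_uniformly_continuous) auto
  then obtain \<eta> where \<eta>: "\<eta> > 0"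
    "\<And>x x'. x \<in> {0..T} \<Longrightarrow> x' \<in> {0..T} \<Longrightarrow> dist x' x < \<eta> \<Longrightarrow> dist (S x') (S x) < \<delta>"
    unfolding uniformly_continuous_on_def using \<delta>_pos by metis
  have gap: "\<eta> \<le> pt (Suc k) - pt k" if "pt (Suc k) \<le> T" for k
    using \<eta>(2)[of "pt k" "pt (Suc k)"] leb_pt_step[OF that] that leb_pt_nonneg[of k]
    by (force simp: dist_real_def)
  have linear: "real k * \<eta> \<le> pt k" if "pt k \<le> T" for k
    using that
  proof (induction k)
    case (Suc k)
    thus ?case using gap[OF Suc.prems] leb_pt_le_Suc[of k] by (simp add: algebra_simps)
  qed simp
  obtain K :: nat where "T / \<eta> < K" using reals_Archimedean2 by blast
  hence "T < real K * \<eta>" using \<eta>(1) by (simp add: field_simps)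
  hence "T < pt K" using linear[of K] by (cases "pt K \<le> T") auto
  thus ?thesis ..
qed

lemma leb_pt_locate:
  assumes "0 \<le> u" "u \<le> T"
  obtains k where "pt k \<le> u" "u < pt (Suc k)"
proof -
  obtain K where "pt K > T" using leb_pt_exceeds by blast
  define m where "m = (LEAST m. u < pt m)"
  have um: "u < pt m" unfolding m_def by (rule LeastI[where k=K]) (use \<open>pt K > T\<close> assms in auto)
  then obtain k where mk: "m = Suc k" using assms by (cases m) auto
  have "\<not> u < pt k" using not_less_Least[of k "\<lambda>m. u < pt m"] mk unfolding m_def by auto
  thus ?thesis using that um mk by (auto simp: not_less)
qed

lemma leb_pt_locate_grid_value:
  assumes "0 \<le> u" "u \<le> T" "on_grid \<delta> (S u)"
  obtains k where "pt k \<le> u" "u < pt (Suc k)" "S (pt k) = S u"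
proof -
  obtain k where k: "pt k \<le> u" "u < pt (Suc k)" using leb_pt_locate[OF assms(1,2)] .
  have "\<bar>S u - S (pt k)\<bar> < \<delta>" using leb_pt_Suc[of k] k assms by auto
  thus ?thesis using that k on_grid_unique[OF \<delta>_pos assms(3) leb_pt_on_grid] assms by force
qed

abbreviation \<tau> :: "nat \<Rightarrow> real" where "\<tau> i \<equiv> fst (exc S T \<delta> i)"
abbreviation \<theta> :: "nat \<Rightarrow> real" where "\<theta> i \<equiv> snd (exc S T \<delta> i)"

lemma exc_Suc_eqs:
  "\<tau> (Suc i) = hit T (\<lambda>u. S u = \<delta>) (\<theta> i)" "\<theta> (Suc i) = hit T (\<lambda>u. S u = 0) (\<tau> (Suc i))"
  by (simp_all add: exc.simps(2) Let_def)

lemma excursion_Suc_from_zero: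
  assumes "\<theta> (Suc i) \<le> T" "0 \<le> \<theta> i" "S (\<theta> i) = 0"
  shows "\<theta> i < \<tau> (Suc i) \<and> \<tau> (Suc i) < \<theta> (Suc i) \<and> S (\<tau> (Suc i)) = \<delta> \<and> S (\<theta> (Suc i)) = 0"
proof -
  have "\<tau> (Suc i) \<le> T"
    using assms(1) hit_beyond[of T "\<tau> (Suc i)"] unfolding exc_Suc_eqs(2) by fastforce
  hence \<tau>: "\<theta> i < \<tau> (Suc i) \<and> S (\<tau> (Suc i)) = \<delta>"
    using hit_attained[of "\<theta> i" T S \<delta>] assms(2,3) \<delta>_pos continuous_on_subset[OF continuous]
    unfolding exc_Suc_eqs(1) by auto
  moreover have "\<tau> (Suc i) < \<theta> (Suc i) \<and> S (\<theta> (Suc i)) = 0"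
    using hit_attained[of "\<tau> (Suc i)" T S 0] \<tau> assms \<delta>_pos continuous_on_subset[OF continuous]
    unfolding exc_Suc_eqs(2) by auto
  ultimately show ?thesis by blast
qed

lemma excursion_end_le_T_SucD: "\<theta> (Suc i) \<le> T \<Longrightarrow> \<theta> i \<le> T"
  using hit_beyond[of T "\<tau> (Suc i)"] hit_beyond[of T "\<theta> i"] hit_cases[of T _ "\<tau> (Suc i)"]
  unfolding exc_Suc_eqs by (metis linorder_not_le less_add_one not_less_iff_gr_or_eq)

lemma excursion_end_zero: "\<theta> i \<le> T \<Longrightarrow> 0 \<le> \<theta> i \<and> S (\<theta> i) = 0"
proof (induction i)
  case 0 thus ?case using S_0 by simp
next
  case (Suc i)
  thus ?case
    using excursion_Suc_from_zero[OF Suc.prems] excursion_end_le_T_SucD[OF Suc.prems] by force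
qed

lemma excursion_Suc:
  assumes "\<theta> (Suc i) \<le> T"
  shows "0 \<le> \<theta> i \<and> \<theta> i < \<tau> (Suc i) \<and> \<tau> (Suc i) < \<theta> (Suc i) \<and> S (\<tau> (Suc i)) = \<delta>"
  using excursion_Suc_from_zero[OF assms] excursion_end_zero excursion_end_le_T_SucD[OF assms] by blast

lemma excursion_end_mono: "i \<le> i' \<Longrightarrow> \<theta> i' \<le> T \<Longrightarrow> \<theta> i \<le> \<theta> i'"
proof (induction i' rule: dec_induct)
  case (step i')
  thus ?case using excursion_Suc[OF step.prems] excursion_end_le_T_SucD[OF step.prems] by force
qed simp

definition upcrossings :: "real \<Rightarrow> nat set" where
  "upcrossings t = {j. S (pt j) = 0 \<and> S (pt (Suc j)) = \<delta> \<and> pt (Suc j) \<le> t}"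

definition completed_excursions :: "real \<Rightarrow> nat set" where
  "completed_excursions t = {i. 1 \<le> i \<and> \<theta> i \<le> t}"

lemma upcrossings_subset:
  assumes "t \<le> T" "T < pt K"
  shows "upcrossings t \<subseteq> {..<K}"
proof
  fix j assume "j \<in> upcrossings t"
  hence "pt (Suc j) \<le> T" using assms(1) unfolding upcrossings_def by simp
  hence "\<not> K \<le> Suc j" using assms(2) leb_pt_mono[of K "Suc j"] by linarith
  thus "j \<in> {..<K}" by simp
qed

lemma finite_upcrossings: "t \<le> T \<Longrightarrow> finite (upcrossings t)"
  using leb_pt_exceeds upcrossings_subset by (meson finite_lessThan finite_subset)

lemma upcrossing_between:
  assumes "k < k'" "S (pt k) = 0" "S (pt k') = \<delta>" "pt k' \<le> T"
  obtains j where "k \<le> j" "j < k'" "S (pt j) = 0" "S (pt (Suc j)) = \<delta>"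
proof -
  define m where "m = (LEAST m. k < m \<and> \<delta> \<le> S (pt m))"
  have m: "k < m" "\<delta> \<le> S (pt m)" unfolding m_def by (rule LeastI2[where a=k'], use assms in auto)+
  have "m \<le> k'" unfolding m_def by (rule Least_le) (use assms in auto)
  then obtain j where j: "m = Suc j" "k \<le> j" "j < k'" using m by (cases m) auto
  have "S (pt j) < \<delta>"
  proof (cases "j = k")
    case False
    hence "\<not> (k < j \<and> \<delta> \<le> S (pt j))" using not_less_Least[of j "\<lambda>m. k < m \<and> \<delta> \<le> S (pt m)"] j
      unfolding m_def by auto
    thus ?thesis using False j by auto
  qed (use assms \<delta>_pos in simp)
  moreover have "pt m \<le> T" using leb_pt_mono[OF \<open>m \<le> k'\<close>] assms by auto
  hence step: "\<bar>S (pt (Suc j)) - S (pt j)\<bar> = \<delta>" "pt j \<le> T"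
    using leb_pt_step[of j] j by auto
  moreover have "0 \<le> S (pt j)" using step m j by auto
  ultimately have "S (pt j) = 0" using on_grid_unique[OF \<delta>_pos leb_pt_on_grid on_grid_0] by force
  moreover have "S (pt (Suc j)) = \<delta>"
    using calculation step(1) m(2) unfolding j(1) by (simp add: abs_if split: if_splits)
  ultimately show ?thesis using that j by blast
qed

lemma upcrossing_in_excursion:
  assumes "i \<in> completed_excursions t" "t \<le> T"
  shows "\<exists>j\<in>upcrossings t. \<theta> (i - 1) < pt (Suc j) \<and> pt (Suc j) \<le> \<tau> i"
proof -
  obtain i0 where i0: "i = Suc i0" using assms(1) unfolding completed_excursions_def by (cases i) auto
  have end_le: "\<theta> i \<le> T" "\<theta> i \<le> t" using assms unfolding completed_excursions_def by auto
  note exc = excursion_Suc[OF end_le(1)[unfolded i0]] excursion_end_zero[of i0]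
  obtain k where k: "pt k \<le> \<theta> i0" "\<theta> i0 < pt (Suc k)" "S (pt k) = 0"
    using leb_pt_locate_grid_value[of "\<theta> i0"] exc end_le i0 by auto
  obtain k' where k': "pt k' \<le> \<tau> i" "\<tau> i < pt (Suc k')" "S (pt k') = \<delta>"
    using leb_pt_locate_grid_value[of "\<tau> i"] exc end_le i0 \<delta>_pos by auto
  have "k < k'"
  proof (rule ccontr)
    assume "\<not> k < k'"
    hence "k' = k \<or> Suc k' \<le> k" by auto
    thus False using leb_pt_mono[of "Suc k'" k] k k' exc i0 \<delta>_pos by auto
  qed
  then obtain j where j: "k \<le> j" "j < k'" "S (pt j) = 0" "S (pt (Suc j)) = \<delta>"
    using upcrossing_between k k' exc end_le i0 by (metis order.trans less_imp_le)
  have "pt (Suc j) \<le> \<tau> i" using leb_pt_mono[of "Suc j" k'] j k' by auto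
  moreover have "\<theta> i0 < pt (Suc j)" using leb_pt_mono[of "Suc k" "Suc j"] j k by auto
  ultimately show ?thesis
    using j exc end_le i0 unfolding upcrossings_def by (intro bexI[of _ j]) auto
qed

lemma card_completed_excursions_le:
  assumes "t \<le> T"
  shows "finite (completed_excursions t) \<and> card (completed_excursions t) \<le> card (upcrossings t)"
proof -
  obtain f where f: "\<And>i. i \<in> completed_excursions t \<Longrightarrow>
      f i \<in> upcrossings t \<and> \<theta> (i - 1) < pt (Suc (f i)) \<and> pt (Suc (f i)) \<le> \<tau> i"
    using upcrossing_in_excursion[OF _ assms] by metis
  \<comment> \<open>the excursions are disjoint in time, hence so are the upcrossings they contain\<close>
  have "inj_on f (completed_excursions t)"
  proof (rule linorder_inj_onI')
    fix i i' assume ii: "i \<in> completed_excursions t" "i' \<in> completed_excursions t" "i < i'"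
    obtain i1 where i1: "i' = Suc i1" using ii(3) by (cases i') auto
    have "\<theta> i' \<le> T" using ii(2) assms unfolding completed_excursions_def by auto
    hence "\<tau> i < \<theta> i" "\<theta> i \<le> \<theta> i1"
      using excursion_Suc[of "i - 1"] excursion_end_mono[of i i1] ii i1
        excursion_end_le_T_SucD[of i1] unfolding completed_excursions_def by auto
    thus "f i \<noteq> f i'" using f[OF ii(1)] f[OF ii(2)] i1 by force
  qed
  moreover have "f ` completed_excursions t \<subseteq> upcrossings t" using f by auto
  ultimately show ?thesis using finite_upcrossings[OF assms] inj_on_finite card_inj_on_le by blast
qed

lemma excursion_between_upcrossings:
  assumes "j \<in> upcrossings t" "j' \<in> upcrossings t" "j < j'" "t \<le> T"
  shows "\<exists>i. 1 \<le> i \<and> pt j < \<theta> i \<and> \<theta> i \<le> pt j'"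
proof -
  obtain n where n: "completed_excursions t \<subseteq> {..<n}"
    using card_completed_excursions_le[OF assms(4)] by (auto simp: finite_nat_set_iff_bounded)
  have U: "S (pt j) = 0" "S (pt (Suc j)) = \<delta>" "pt (Suc j) \<le> t"
    "S (pt j') = 0" "S (pt (Suc j')) = \<delta>" "pt (Suc j') \<le> t"
    using assms(1,2) unfolding upcrossings_def by auto
  have "1 \<le> Suc n \<and> pt j < \<theta> (Suc n)"
    using n[THEN subsetD, of "Suc n"] U leb_pt_le_Suc[of j] unfolding completed_excursions_def by force
  define i where "i = (LEAST i. 1 \<le> i \<and> pt j < \<theta> i)"
  have i: "1 \<le> i" "pt j < \<theta> i" unfolding i_def
    by (rule LeastI2[where a="Suc n"], use \<open>1 \<le> Suc n \<and> _\<close> in auto)+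
  then obtain i0 where i0: "i = Suc i0" by (cases i) auto
  have "\<theta> i0 \<le> pt j"
    using not_less_Least[of i0 "\<lambda>i. 1 \<le> i \<and> pt j < \<theta> i"] leb_pt_nonneg[of j] i0
    unfolding i_def by (cases i0) auto
  have "pt j' \<le> T" using U assms(4) leb_pt_le_Suc[of j'] by auto
  have "Suc j \<noteq> j'" using U \<delta>_pos by auto
  hence "pt (Suc j) < pt j'" using assms(3) \<open>pt j' \<le> T\<close> by (intro leb_pt_less) auto
  moreover have "\<tau> i \<le> pt (Suc j)"
    unfolding i0 exc_Suc_eqs(1) using \<open>\<theta> i0 \<le> pt j\<close> U assms(4) leb_pt_less[of j "Suc j"]
    by (intro hit_le) auto
  ultimately have "\<theta> i \<le> pt j'"
    unfolding i0 exc_Suc_eqs(2) using U \<open>pt j' \<le> T\<close> by (intro hit_le) auto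
  thus ?thesis using i by blast
qed

lemma card_upcrossings_le:
  assumes "t \<le> T"
  shows "card (upcrossings t) \<le> card (completed_excursions t) + 1"
proof -
  have fin: "finite (completed_excursions t)" using card_completed_excursions_le[OF assms] ..
  define F where "F j = card (completed_excursions (pt j))" for j
  have sub: "completed_excursions (pt j) \<subseteq> completed_excursions t" if "j \<in> upcrossings t" for j
    using that leb_pt_le_Suc[of j] unfolding upcrossings_def completed_excursions_def by auto
  have F_less: "F j < F j'" if jj: "j \<in> upcrossings t" "j' \<in> upcrossings t" "j < j'" for j j'
  proof -
    obtain i where "1 \<le> i" "pt j < \<theta> i" "\<theta> i \<le> pt j'"
      using excursion_between_upcrossings[OF jj assms] by blast
    hence "i \<in> completed_excursions (pt j') - completed_excursions (pt j)"
      unfolding completed_excursions_def by auto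
    moreover have "completed_excursions (pt j) \<subseteq> completed_excursions (pt j')"
      using leb_pt_mono[of j j'] jj unfolding completed_excursions_def by auto
    moreover have "finite (completed_excursions (pt j'))" using sub[OF jj(2)] fin by (rule finite_subset)
    ultimately show ?thesis unfolding F_def by (intro psubset_card_mono) auto
  qed
  have "inj_on F (upcrossings t)" by (rule linorder_inj_onI') (simp add: F_less less_imp_neq)
  moreover have "F ` upcrossings t \<subseteq> {..card (completed_excursions t)}"
    using card_mono[OF fin sub] unfolding F_def by auto
  ultimately have "card (upcrossings t) \<le> card {..card (completed_excursions t)}"
    by (intro card_inj_on_le) auto
  thus ?thesis by simp
qed

definition local_time_term :: "real \<Rightarrow> real \<Rightarrow> nat \<Rightarrow> real" where
  "local_time_term p t j = indicator (oint (S (min (pt j) t)) (S (min (pt (Suc j)) t))) 0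
     * rpow \<bar>S (min (pt (Suc j)) t)\<bar> (p - 1)"

lemma local_time_term_nonneg: "0 \<le> local_time_term p t j"
  unfolding local_time_term_def by (simp add: rpow_nonneg)

lemma local_time_term_after: "t < pt j \<Longrightarrow> local_time_term p t j = 0"
  using leb_pt_le_Suc[of j] unfolding local_time_term_def oint_def by simp

lemma disc_lt_eq_sum:
  assumes "t \<le> T" "T < pt K"
  shows "disc_lt S T \<delta> p t 0 = sum (local_time_term p t) {..<K}"
proof -
  have "local_time_term p t j = 0" if "j \<notin> {..<K}" for j
    using that assms leb_pt_mono[of K j] by (intro local_time_term_after) auto
  hence "(\<Sum>j. local_time_term p t j) = sum (local_time_term p t) {..<K}"
    by (intro suminf_finite) auto
  thus ?thesis unfolding disc_lt_def local_time_term_def by simp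
qed

lemma local_time_term_upcrossing:
  assumes "j \<in> upcrossings t" "t \<le> T"
  shows "local_time_term p t j = \<delta> powr (p - 1)"
proof -
  have U: "S (pt j) = 0" "S (pt (Suc j)) = \<delta>" "pt (Suc j) \<le> t"
    using assms(1) unfolding upcrossings_def by auto
  hence "min (pt j) t = pt j" "min (pt (Suc j)) t = pt (Suc j)"
    using leb_pt_le_Suc[of j] by auto
  thus ?thesis unfolding local_time_term_def oint_def using U \<delta>_pos by (simp add: rpow_pos)
qed

\<comment> \<open>for \<open>p = 1\<close> the downcrossings \<open>\<delta> \<rightarrow> 0\<close> also contribute, since \<open>rpow 0 0 = 1\<close>\<close>
lemma local_time_term_completed_step:
  assumes "pt (Suc j) \<le> t" "t \<le> T" "1 < p" "local_time_term p t j \<noteq> 0"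
  shows "j \<in> upcrossings t"
proof -
  have step: "pt j < pt (Suc j)" "\<bar>S (pt (Suc j)) - S (pt j)\<bar> = \<delta>"
    using leb_pt_step[of j] assms(1,2) by auto
  hence min: "min (pt j) t = pt j" "min (pt (Suc j)) t = pt (Suc j)" using assms(1) by auto
  have grid: "on_grid \<delta> (S (pt j))" "on_grid \<delta> (S (pt (Suc j)))"
    using leb_pt_on_grid step(1) assms(1,2) by auto
  have "S (pt (Suc j)) \<noteq> 0" using assms(3,4) unfolding local_time_term_def min rpow_def by auto
  hence "\<not> (S (pt (Suc j)) \<le> 0 \<and> 0 < S (pt j))"
    using step(2) on_grid_unique[OF \<delta>_pos grid(2) on_grid_0] by auto
  moreover have "0 \<in> oint (S (pt j)) (S (pt (Suc j)))"
    using assms(4) unfolding local_time_term_def min by (auto simp: indicator_def split: if_splits)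
  ultimately have "S (pt j) \<le> 0" "0 < S (pt (Suc j))" unfolding oint_def by (auto split: if_splits)
  hence "\<bar>S (pt j) - 0\<bar> < \<delta>" using step(2) by linarith
  hence "S (pt j) = 0" using on_grid_unique[OF \<delta>_pos grid(1) on_grid_0] by auto
  thus ?thesis using step(2) \<open>0 < S (pt (Suc j))\<close> assms(1) unfolding upcrossings_def by auto
qed

lemma local_time_term_straddling:
  assumes "pt j \<le> t" "t < pt (Suc j)" "t \<le> T" "1 \<le> p"
  shows "local_time_term p t j \<le> \<delta> powr (p - 1)"
proof (cases "0 \<in> oint (S (pt j)) (S t)")
  case True
  have close: "\<bar>S t - S (pt j)\<bar> < \<delta>" using leb_pt_Suc[of j] assms by auto
  moreover have "\<bar>S (pt j)\<bar> \<le> \<bar>S t - S (pt j)\<bar>" using True unfolding oint_def by (auto split: if_splits)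
  ultimately have "S (pt j) = 0"
    using on_grid_unique[OF \<delta>_pos leb_pt_on_grid on_grid_0] assms by force
  hence "rpow \<bar>S t\<bar> (p - 1) \<le> rpow \<delta> (p - 1)" using close assms(4) by (intro rpow_mono) auto
  thus ?thesis using assms \<delta>_pos unfolding local_time_term_def by (auto simp: rpow_pos indicator_def)
qed (use assms in \<open>simp add: local_time_term_def\<close>)

lemma disc_lt_lower:
  assumes "t \<le> T"
  shows "\<delta> powr (p - 1) * card (upcrossings t) \<le> disc_lt S T \<delta> p t 0"
proof -
  obtain K where K: "T < pt K" using leb_pt_exceeds by blast
  have "\<delta> powr (p - 1) * card (upcrossings t) = sum (local_time_term p t) (upcrossings t)"
    using local_time_term_upcrossing[OF _ assms] by simp
  also have "\<dots> \<le> sum (local_time_term p t) {..<K}"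
    using upcrossings_subset[OF assms K] by (intro sum_mono2) (auto simp: local_time_term_nonneg)
  finally show ?thesis using disc_lt_eq_sum[OF assms K] by simp
qed

lemma disc_lt_upper:
  assumes "t \<le> T" "1 < p"
  shows "disc_lt S T \<delta> p t 0 \<le> \<delta> powr (p - 1) * (card (upcrossings t) + 1)"
proof -
  obtain K where K: "T < pt K" using leb_pt_exceeds by blast
  define Z where "Z = {j \<in> {..<K} - upcrossings t. local_time_term p t j \<noteq> 0}"
  have straddle: "pt j \<le> t \<and> t < pt (Suc j)" if "j \<in> Z" for j
  proof -
    have "j \<notin> upcrossings t" "local_time_term p t j \<noteq> 0" using that unfolding Z_def by auto
    thus ?thesis
      using local_time_term_after[of t j] local_time_term_completed_step[OF _ assms(1,2)] by (meson not_le)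
  qed
  have "\<forall>j\<in>Z. \<forall>j'\<in>Z. j = j'"
  proof (intro ballI)
    fix j j' assume "j \<in> Z" "j' \<in> Z"
    hence "pt j \<le> t" "t < pt (Suc j)" "pt j' \<le> t" "t < pt (Suc j')" using straddle by auto
    hence "\<not> Suc j \<le> j'" "\<not> Suc j' \<le> j"
      using leb_pt_mono[of "Suc j" j'] leb_pt_mono[of "Suc j'" j] by auto
    thus "j = j'" by simp
  qed
  moreover have "finite Z" unfolding Z_def by auto
  ultimately have "card Z \<le> 1" using card_le_Suc0_iff_eq by auto
  have "sum (local_time_term p t) ({..<K} - upcrossings t) = sum (local_time_term p t) Z"
    unfolding Z_def by (rule sum.mono_neutral_right) auto
  also have "\<dots> \<le> card Z * \<delta> powr (p - 1)"
    using straddle local_time_term_straddling assms by (intro sum_bounded_above) auto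
  also have "\<dots> \<le> \<delta> powr (p - 1)" using \<open>card Z \<le> 1\<close> by (simp add: mult_left_le_one_le)
  finally have rest: "sum (local_time_term p t) ({..<K} - upcrossings t) \<le> \<delta> powr (p - 1)" .
  have "disc_lt S T \<delta> p t 0
      = sum (local_time_term p t) (upcrossings t) + sum (local_time_term p t) ({..<K} - upcrossings t)"
    using disc_lt_eq_sum[OF assms(1) K] upcrossings_subset[OF assms(1) K] by (simp add: sum.subset_diff)
  also have "sum (local_time_term p t) (upcrossings t) = \<delta> powr (p - 1) * card (upcrossings t)"
    using local_time_term_upcrossing[OF _ assms(1)] by simp
  finally show ?thesis using rest by (simp add: algebra_simps)
qed

lemma excursion_count_bounds:
  assumes "t \<le> T"
  shows "\<delta> powr (p - 1) * num_exc S T \<delta> t \<le> disc_lt S T \<delta> p t 0"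
    and "1 < p \<Longrightarrow> disc_lt S T \<delta> p t 0 \<le> \<delta> powr (p - 1) * (real (num_exc S T \<delta> t) + 2)"
proof -
  have num: "num_exc S T \<delta> t = card (completed_excursions t)"
    unfolding num_exc_def completed_excursions_def ..
  have "card (completed_excursions t) \<le> card (upcrossings t)"
    "card (upcrossings t) \<le> card (completed_excursions t) + 1"
    using card_completed_excursions_le[OF assms] card_upcrossings_le[OF assms] by auto
  hence bounds:
    "\<delta> powr (p - 1) * card (completed_excursions t) \<le> \<delta> powr (p - 1) * card (upcrossings t)"
    "\<delta> powr (p - 1) * (card (upcrossings t) + 1) \<le> \<delta> powr (p - 1) * (real (card (completed_excursions t)) + 2)"
    by (intro mult_left_mono; simp)+
  show "\<delta> powr (p - 1) * num_exc S T \<delta> t \<le> disc_lt S T \<delta> p t 0"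
    unfolding num using disc_lt_lower[OF assms, of p] bounds(1) by linarith
  show "disc_lt S T \<delta> p t 0 \<le> \<delta> powr (p - 1) * (real (num_exc S T \<delta> t) + 2)" if "1 < p"
    unfolding num using disc_lt_upper[OF assms that] bounds(2) by linarith
qed

end

lemma powr_complement_mult: "0 < x \<Longrightarrow> x powr (2 - p) * x powr (p - 1) = (x::real)"
  by (simp add: powr_add[symmetric])

lemma scaled_count_tendsto_zero:
  fixes \<delta> D Ln :: "nat \<Rightarrow> real"
  assumes "\<And>n. 0 < \<delta> n" "\<delta> \<longlonglongrightarrow> 0" "p < 2" "\<And>n. 0 \<le> D n"
    and "\<And>n. \<delta> n powr (p - 1) * D n \<le> Ln n" "Ln \<longlonglongrightarrow> l"
  shows "(\<lambda>n. \<delta> n * D n) \<longlonglongrightarrow> 0"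
proof (rule tendsto_sandwich[OF _ _ tendsto_const])
  have "\<delta> n * D n \<le> \<delta> n powr (2 - p) * Ln n" for n
  proof -
    have "\<delta> n * D n = \<delta> n powr (2 - p) * (\<delta> n powr (p - 1) * D n)"
      using powr_complement_mult[OF assms(1)] by (simp add: mult.assoc[symmetric])
    also have "\<dots> \<le> \<delta> n powr (2 - p) * Ln n" using assms(5) by (rule mult_left_mono) simp
    finally show ?thesis .
  qed
  thus "\<forall>\<^sub>F n in sequentially. \<delta> n * D n \<le> \<delta> n powr (2 - p) * Ln n"
    by (intro always_eventually allI)
  show "\<forall>\<^sub>F n in sequentially. 0 \<le> \<delta> n * D n"
    using assms(1,4) by (intro always_eventually allI) (simp add: less_imp_le)
  have "(\<lambda>n. \<delta> n powr (2 - p) * Ln n) \<longlonglongrightarrow> 0 * l"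
    using assms by (intro tendsto_mult tendsto_zero_powrI always_eventually allI) (auto intro: less_imp_le)
  thus "(\<lambda>n. \<delta> n powr (2 - p) * Ln n) \<longlonglongrightarrow> 0" by simp
qed

lemma normalized_count_tendsto:
  fixes \<delta> D Ln :: "nat \<Rightarrow> real"
  assumes "\<And>n. 0 < \<delta> n" "\<delta> \<longlonglongrightarrow> 0" "1 < p"
    and "\<And>n. \<delta> n powr (p - 1) * D n \<le> Ln n" "\<And>n. Ln n \<le> \<delta> n powr (p - 1) * (D n + 2)"
    and "Ln \<longlonglongrightarrow> l"
  shows "(\<lambda>n. \<delta> n powr (p - 1) * D n) \<longlonglongrightarrow> l"
proof (rule tendsto_sandwich[OF _ _ _ assms(6)])
  have "(\<lambda>n. Ln n - 2 * \<delta> n powr (p - 1)) \<longlonglongrightarrow> l - 2 * 0"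
    using assms(1-3,6)
    by (intro tendsto_diff tendsto_mult tendsto_const tendsto_zero_powrI always_eventually allI)
      (auto intro: less_imp_le)
  thus "(\<lambda>n. Ln n - 2 * \<delta> n powr (p - 1)) \<longlonglongrightarrow> l" by simp
  show "\<forall>\<^sub>F n in sequentially. Ln n - 2 * \<delta> n powr (p - 1) \<le> \<delta> n powr (p - 1) * D n"
    using assms(5) by (intro always_eventually allI) (simp add: algebra_simps)
  show "\<forall>\<^sub>F n in sequentially. \<delta> n powr (p - 1) * D n \<le> Ln n"
    using assms(4) by (intro always_eventually allI)
qed

lemma asymp_equiv_of_normalized_tendsto:
  fixes e D :: "'a \<Rightarrow> real"
  assumes "((\<lambda>x. e x * D x) \<longlongrightarrow> l) F" "l \<noteq> 0" "\<And>x. e x \<noteq> 0"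
  shows "D \<sim>[F] (\<lambda>x. l / e x)"
proof (rule asymp_equivI')
  have "((\<lambda>x. e x * D x / l) \<longlongrightarrow> l / l) F" using assms(1,2) by (intro tendsto_intros)
  thus "((\<lambda>x. D x / (l / e x)) \<longlongrightarrow> 1) F" using assms(2,3) by (simp add: field_simps)
qed

lemma scaled_count_filterlim_at_top:
  fixes \<delta> D :: "nat \<Rightarrow> real"
  assumes "\<And>n. 0 < \<delta> n" "\<delta> \<longlonglongrightarrow> 0" "2 < p" "(\<lambda>n. \<delta> n powr (p - 1) * D n) \<longlonglongrightarrow> l" "0 < l"
  shows "filterlim (\<lambda>n. \<delta> n * D n) at_top sequentially"
proof -
  have "filterlim (\<lambda>n. inverse (\<delta> n powr (p - 2))) at_top sequentially"
    using assms(1-3) by (intro filterlim_inverse_at_top tendsto_zero_powrI always_eventually allI)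
      (auto intro: less_imp_le simp: less_imp_neq[OF assms(1), symmetric])
  hence "filterlim (\<lambda>n. \<delta> n powr (p - 1) * D n * \<delta> n powr (2 - p)) at_top sequentially"
    using assms(4,5) by (intro filterlim_tendsto_pos_mult_at_top) (simp_all add: powr_minus[symmetric])
  moreover have "\<delta> n powr (p - 1) * D n * \<delta> n powr (2 - p) = \<delta> n * D n" for n
    using powr_complement_mult[OF assms(1)] by (simp add: ac_simps)
  ultimately show ?thesis by simp
qed

lemma dyad_pos: "0 < dyad n"
  unfolding dyad_def by simp

lemma dyad_tendsto_zero: "dyad \<longlonglongrightarrow> 0"
  unfolding dyad_def by (rule LIMSEQ_inverse_realpow_zero) simp

theorem mainTheorem6:
  fixes S :: "real \<Rightarrow> real" and T p :: real and L :: "real \<Rightarrow> real \<Rightarrow> real"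
  assumes "p \<ge> 1" and "T > 0"
    and "continuous_on {0..T} S" and "S 0 = 0"
    and "uniform_limit ({0..T} \<times> UNIV)
           (\<lambda>n (t, x). disc_lt S T (dyad n) p t x) (\<lambda>(t, x). L t x) sequentially"
    and "continuous_on ({0..T} \<times> UNIV) (\<lambda>(t, x). L t x)"
    and "\<And>t. t \<in> {0<..T} \<Longrightarrow> L t 0 > 0"
  shows "\<forall>t\<in>{0<..T}.
     (p < 2 \<longrightarrow> (\<lambda>n. dyad n * real (num_exc S T (dyad n) t)) \<longlonglongrightarrow> 0)
   \<and> (p > 2 \<longrightarrow> filterlim (\<lambda>n. dyad n * real (num_exc S T (dyad n) t)) at_top sequentially
               \<and> (\<lambda>n. real (num_exc S T (dyad n) t)) \<sim>[sequentially] (\<lambda>n. L t 0 / dyad n powr (p - 1)))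
   \<and> (p = 2 \<longrightarrow> (\<lambda>n. dyad n * real (num_exc S T (dyad n) t)) \<longlonglongrightarrow> L t 0
               \<and> (\<lambda>n. real (num_exc S T (dyad n) t)) \<sim>[sequentially] (\<lambda>n. L t 0 / dyad n))"
proof (intro ballI)
  fix t assume t: "t \<in> {0<..T}"
  let ?D = "\<lambda>n. real (num_exc S T (dyad n) t)" and ?Ln = "\<lambda>n. disc_lt S T (dyad n) p t 0"
  have partition: "lebesgue_partition S T (dyad n)" for n
    using assms(2-4) dyad_pos by unfold_locales
  have lower: "dyad n powr (p - 1) * ?D n \<le> ?Ln n" for n
    using lebesgue_partition.excursion_count_bounds(1)[OF partition] t by simp
  have upper: "?Ln n \<le> dyad n powr (p - 1) * (?D n + 2)" if "1 < p" for n
    using lebesgue_partition.excursion_count_bounds(2)[OF partition _ that] t by simp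
  have Ln_lim: "?Ln \<longlonglongrightarrow> L t 0" using tendsto_uniform_limitI[OF assms(5), of "(t, 0)"] t by simp
  have zero: "(\<lambda>n. dyad n * ?D n) \<longlonglongrightarrow> 0" if "p < 2"
    using scaled_count_tendsto_zero[OF dyad_pos dyad_tendsto_zero that _ lower Ln_lim] by simp
  have normalized: "(\<lambda>n. dyad n powr (p - 1) * ?D n) \<longlonglongrightarrow> L t 0" if "1 < p"
    using normalized_count_tendsto[OF dyad_pos dyad_tendsto_zero that lower upper[OF that] Ln_lim] .
  have top: "filterlim (\<lambda>n. dyad n * ?D n) at_top sequentially" if "2 < p"
    using scaled_count_filterlim_at_top[OF dyad_pos dyad_tendsto_zero that normalized assms(7)[OF t]] that
    by simp
  have equiv: "?D \<sim>[sequentially] (\<lambda>n. L t 0 / dyad n powr (p - 1))" if "1 < p"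
    using asymp_equiv_of_normalized_tendsto[OF normalized[OF that]] assms(7)[OF t] dyad_pos
    by (simp add: less_imp_neq[symmetric])
  have "dyad n powr (2 - 1) = dyad n" for n using dyad_pos[of n] by simp
  thus "(p < 2 \<longrightarrow> (\<lambda>n. dyad n * ?D n) \<longlonglongrightarrow> 0)
    \<and> (p > 2 \<longrightarrow> filterlim (\<lambda>n. dyad n * ?D n) at_top sequentially
          \<and> ?D \<sim>[sequentially] (\<lambda>n. L t 0 / dyad n powr (p - 1)))
    \<and> (p = 2 \<longrightarrow> (\<lambda>n. dyad n * ?D n) \<longlonglongrightarrow> L t 0 \<and> ?D \<sim>[sequentially] (\<lambda>n. L t 0 / dyad n))"
    using zero top equiv normalized by auto
qed
end
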